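(* Let $p,q$ be positive integers with $p+q$ odd. For all $n\ge3$ and all $g\in\mathcal{J}^{p,q}_n$, $\psi_n(g)\equiv\psi_{n-1}(g_L)+\psi_{n-1}(g_R)\pmod 2$.
   Context: Let $p,q$ be positive integers with $p+q$ odd. $\mathbb{Z}_{2^k}$ denotes the integers modulo $2^k$ ($\mathbb{Z}_1$ trivial); as $p+q$ is odd, division by $p+q$ and $(p+q)^2$ is well defined in $\mathbb{Z}_{2^k}$. For $m\ge1$, $D_{2m}$ is the dihedral group of order $2m$, realized as pairs $(f,x)$, $f\in\mathbb{Z}_2$, $x\in\mathbb{Z}_m$, with product $(f_1,x_1)(f_2,x_2)=(f_1+f_2,x_1+(-1)^{f_1}x_2)$. Define $\Phi:D_{2m}\to D_{2m}$, $\Phi((f,x))=(f,\delta(f=1)(p+q)(p-q)-x)$, where $\delta(f=1)$ is $1$ if $f=1$ and $0$ otherwise. $\mathrm{Aut}(T_1)$ is trivial; for $k\ge1$, $\mathrm{Aut}(T_{k+1})$ is the set of triples $g=(g_f,g_L,g_R)$, $g_f\in\mathbb{Z}_2$, $g_L,g_R\in\mathrm{Aut}(T_k)$, with product $(f,A,B)(g,C,D)=(f+g,AC,BD)$ if $f=0$ and $(f+g,AD,BC)$ if $f=1$; subscripts chain ($g_{LR}=(g_L)_R$, $g_{Lf}=(g_L)_f$). Recursively: $\mathcal{J}_1=\mathrm{Aut}(T_2)$, $\psi_1=0$, $\Delta_1(g)=(g_f,0)$; $\mathcal{J}_2=\{g\in\mathrm{Aut}(T_3):g_L=g_R\}$,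 $\psi_2(g)=\delta(g_{Lf}=1)\in\mathbb{Z}_2$, $\Delta_2(g)=(g_f,\psi_2(g))$; for $n\ge3$, $\mathcal{J}_n=\{g\in\mathrm{Aut}(T_{n+1}):g_L,g_R\in\mathcal{J}_{n-1},\ \Delta_{n-1}(g_L)=\Phi(\Delta_{n-1}(g_R))\}$, with $\psi_n:\mathcal{J}_n\to\mathbb{Z}_{2^{\lfloor n/2\rfloor}}$ given by $\psi_n(g)=(\psi_{n-1}(g_L)+\psi_{n-1}(g_R))/(p+q)$ for odd $n$ and $\psi_n(g)=\big(2(\psi_{n-2}(g_{LL})+\psi_{n-2}(g_{RL}))-\delta(g_{Lf}=1)(p+q)(p-q)\big)/(p+q)^2$ for even $n$ (with $2\psi_{n-2}(\cdot)$ read in $\mathbb{Z}_{2^{n/2}}$), and $\Delta_n:\mathcal{J}_n\to D_{2^{\lfloor n/2\rfloor+1}}$ given by $\Delta_n(g)=(g_f,\psi_{n-1}(g_L)-\psi_{n-1}(g_R))$ for odd $n$ and $\Delta_n(g)=(g_f,(p+q)\psi_n(g)-2\psi_{n-1}(g_R))$ for even $n$. In the claim all values are reduced modulo $2$. *)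

theory Defs
  imports "HOL-Number_Theory.Cong"
begin

text \<open>Elements of Aut(T_k) are represented as full binary trees of labels:
  Node f L R stands for the triple (g_f, g_L, g_R); Leaf is the trivial automorphism of T_1.\<close>
datatype atree = Leaf | Node bool atree atree

fun isAut :: "nat \<Rightarrow> atree \<Rightarrow> bool" where
  "isAut 0 t = False"
| "isAut (Suc 0) t = (t = Leaf)"
| "isAut (Suc (Suc k)) t =
     (case t of Leaf \<Rightarrow> False | Node f L R \<Rightarrow> isAut (Suc k) L \<and> isAut (Suc k) R)"

text \<open>Components: g_f (True means g_f = 1), g_L, g_R.\<close>
fun gf :: "atree \<Rightarrow> bool" where
  "gf Leaf = False" | "gf (Node f L R) = f"
fun gL :: "atree \<Rightarrow> atree" where
  "gL Leaf = Leaf" | "gL (Node f L R) = L"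
fun gR :: "atree \<Rightarrow> atree" where
  "gR Leaf = Leaf" | "gR (Node f L R) = R"

text \<open>Division b / a in Z_m (m = 2^k, a odd), with the result given by its
  representative in [0, m).\<close>
definition zdivm :: "int \<Rightarrow> int \<Rightarrow> int \<Rightarrow> int" where
  "zdivm m b a = (THE x. 0 \<le> x \<and> x < m \<and> [a * x = b] (mod m))"

text \<open>psi p q n g : value of psi_n(g) in Z_{2^(n div 2)}, as representative in [0, 2^(n div 2)).\<close>
function psi :: "int \<Rightarrow> int \<Rightarrow> nat \<Rightarrow> atree \<Rightarrow> int" where
  "psi p q n g =
    (if n \<le> 1 then 0
     else if n = 2 then (if gf (gL g) then 1 else 0)
     else if odd n then
       zdivm (2 ^ (n div 2)) (psi p q (n - 1) (gL g) + psi p q (n - 1) (gR g)) (p + q)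
     else
       zdivm (2 ^ (n div 2))
         (2 * (psi p q (n - 2) (gL (gL g)) + psi p q (n - 2) (gL (gR g)))
           - (if gf (gL g) then (p + q) * (p - q) else 0))
         ((p + q) ^ 2))"
  by pat_completeness auto
termination by (relation "measure (\<lambda>(p, q, n, g). n)") auto

text \<open>Delta p q n g : Delta_n(g) in D_{2m}, m = 2^(n div 2), as pair (f, x) with x in [0, m).\<close>
definition Delta :: "int \<Rightarrow> int \<Rightarrow> nat \<Rightarrow> atree \<Rightarrow> bool \<times> int" where
  "Delta p q n g =
    (if n \<le> 1 then (gf g, 0)
     else if n = 2 then (gf g, psi p q 2 g)
     else if odd n then
       (gf g, (psi p q (n - 1) (gL g) - psi p q (n - 1) (gR g)) mod 2 ^ (n div 2))
     else
       (gf g, ((p + q) * psi p q n g - 2 * psi p q (n - 1) (gR g)) mod 2 ^ (n div 2)))"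

definition Phi :: "int \<Rightarrow> int \<Rightarrow> int \<Rightarrow> bool \<times> int \<Rightarrow> bool \<times> int" where
  "Phi p q m d = (fst d, ((if fst d then (p + q) * (p - q) else 0) - snd d) mod m)"

fun inJ :: "int \<Rightarrow> int \<Rightarrow> nat \<Rightarrow> atree \<Rightarrow> bool" where
  "inJ p q 0 g = False"
| "inJ p q (Suc 0) g = isAut 2 g"
| "inJ p q (Suc (Suc 0)) g = (isAut 3 g \<and> gL g = gR g)"
| "inJ p q (Suc (Suc (Suc k))) g =
     (isAut (k + 4) g \<and> inJ p q (Suc (Suc k)) (gL g) \<and> inJ p q (Suc (Suc k)) (gR g) \<and>
      Delta p q (Suc (Suc k)) (gL g) =
        Phi p q (2 ^ (Suc (Suc k) div 2)) (Delta p q (Suc (Suc k)) (gR g)))"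

end

theory Submission
  imports Defs
begin

text \<open>Dividing by an odd number modulo \<open>2\<^sup>k\<close> does not change parity. Hence for odd \<open>n\<close> the
  claim is immediate, while for even \<open>n\<close> the definition gives
  \<open>\<psi>\<^sub>n(g) \<equiv> \<delta>(g\<^sub>L\<^sub>f = 1)\<close>, because \<open>(p+q)(p-q)\<close> is odd. On the other side,
  \<open>\<Delta>\<^sub>n(h) \<equiv> \<psi>\<^sub>n(h)\<close> and \<open>\<Phi>(f, x) \<equiv> (f, \<delta>(f = 1) + x)\<close> modulo 2, so the defining
  condition \<open>\<Delta>\<^sub>n\<^sub>-\<^sub>1(g\<^sub>L) = \<Phi>(\<Delta>\<^sub>n\<^sub>-\<^sub>1(g\<^sub>R))\<close> of \<open>\<J>\<^sub>n\<close> forces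
  \<open>\<psi>\<^sub>n\<^sub>-\<^sub>1(g\<^sub>L) + \<psi>\<^sub>n\<^sub>-\<^sub>1(g\<^sub>R) \<equiv> \<delta>(g\<^sub>L\<^sub>f = 1)\<close> as well.\<close>

declare psi.simps [simp del]

lemma zdivm_cong:
  fixes a b m :: int
  assumes "coprime a m" and "m > 0"
  shows "[a * zdivm m b a = b] (mod m)"
proof -
  obtain y where y: "[a * y = 1] (mod m)"
    using cong_solve_coprime_int[OF assms(1)] by blast
  define x where "x = (y * b) mod m"
  have x_range: "0 \<le> x" "x < m"
    unfolding x_def using assms(2) by auto
  have "[a * x = a * (y * b)] (mod m)"
    unfolding x_def by (simp add: cong_def mod_mult_right_eq)
  also have "[a * (y * b) = 1 * b] (mod m)"
    using cong_mult[OF y cong_refl[of b]] by (simp add: ac_simps)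
  finally have x_sol: "[a * x = b] (mod m)"
    by simp
  have "zdivm m b a = x"
    unfolding zdivm_def
  proof (rule the_equality)
    fix z
    assume z: "0 \<le> z \<and> z < m \<and> [a * z = b] (mod m)"
    then have "[a * z = a * x] (mod m)"
      using cong_sym[OF x_sol] cong_trans by blast
    then have "[z = x] (mod m)"
      using cong_mult_lcancel[OF assms(1)] by simp
    then show "z = x"
      using cong_less_imp_eq_int z x_range by blast
  qed (use x_range x_sol in simp)
  then show ?thesis
    using x_sol by simp
qed

lemma zdivm_cong_mod_2:
  fixes a b m :: int
  assumes "coprime a m" and "even m" and "m > 0"
  shows "[zdivm m b a = b] (mod 2)"
proof -
  have "[a * zdivm m b a = b] (mod 2)"
    using zdivm_cong[OF assms(1,3)] assms(2) cong_dvd_modulus by blast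
  moreover have "odd a"
    using assms(1,2) coprime_common_divisor by fastforce
  then have "[a = 1] (mod 2)"
    by (simp add: cong_def odd_iff_mod_2_eq_one)
  ultimately show ?thesis
    by (metis cong_scalar_right cong_trans cong_sym mult_1)
qed

lemma cong_mod_even_mod_2:
  fixes x m :: int
  assumes "even m"
  shows "[x mod m = x] (mod 2)"
  using assms by (simp add: cong_def mod_mod_cancel)

lemma psi_odd_cong_children:
  assumes "odd (p + q)" and "odd n" and "n \<ge> 3"
  shows "[psi p q n g = psi p q (n - 1) (gL g) + psi p q (n - 1) (gR g)] (mod 2)"
proof -
  have "psi p q n g =
      zdivm (2 ^ (n div 2)) (psi p q (n - 1) (gL g) + psi p q (n - 1) (gR g)) (p + q)"
    using assms(2,3) by (subst psi.simps) simp
  moreover have "coprime (p + q) (2 ^ (n div 2))"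
    using assms(1) by (simp add: coprime_commute)
  moreover have "even ((2::int) ^ (n div 2))"
    using assms(3) by simp
  ultimately show ?thesis
    by (simp add: zdivm_cong_mod_2)
qed

lemma psi_even_cong_gf:
  assumes "odd (p + q)" and "even n" and "n \<ge> 2"
  shows "[psi p q n g = of_bool (gf (gL g))] (mod 2)"
proof (cases "n = 2")
  case True
  then show ?thesis
    by (subst psi.simps) simp
next
  case False
  define E where "E = (if gf (gL g) then (p + q) * (p - q) else 0)"
  define b where "b = 2 * (psi p q (n - 2) (gL (gL g)) + psi p q (n - 2) (gL (gR g))) - E"
  have "psi p q n g = zdivm (2 ^ (n div 2)) b ((p + q) ^ 2)"
    using assms(2,3) False unfolding b_def E_def by (subst psi.simps) simp
  moreover have "coprime ((p + q) ^ 2) (2 ^ (n div 2))"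
    using assms(1) by (simp add: coprime_commute)
  moreover have "even ((2::int) ^ (n div 2))"
    using assms(3) by simp
  ultimately have "[psi p q n g = b] (mod 2)"
    by (simp add: zdivm_cong_mod_2)
  moreover have "odd ((p + q) * (p - q))"
    using assms(1) by simp
  then have "[b = of_bool (gf (gL g))] (mod 2)"
    unfolding b_def E_def by (simp add: cong_iff_dvd_diff)
  ultimately show ?thesis
    using cong_trans by blast
qed

lemma fst_Delta [simp]: "fst (Delta p q n g) = gf g"
  by (simp add: Delta_def)

lemma fst_Phi [simp]: "fst (Phi p q m d) = fst d"
  by (simp add: Phi_def)

lemma Delta_snd_cong_psi:
  assumes "odd (p + q)"
  shows "[snd (Delta p q n g) = psi p q n g] (mod 2)"
proof -
  have "n \<le> 2 \<or> odd n \<and> n \<ge> 3 \<or> even n \<and> n \<ge> 4"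
    by presburger
  then consider "n \<le> 2" | "odd n" "n \<ge> 3" | "even n" "n \<ge> 4"
    by blast
  then show ?thesis
  proof cases
    case 1
    then have "n = 0 \<or> n = 1 \<or> n = 2"
      by auto
    then show ?thesis
      by (auto simp: Delta_def psi.simps[of p q 0] psi.simps[of p q "Suc 0"])
  next
    case 2
    let ?d = "psi p q (n - 1) (gL g) - psi p q (n - 1) (gR g)"
    have "snd (Delta p q n g) = ?d mod 2 ^ (n div 2)"
      using 2 by (simp add: Delta_def)
    also have "[\<dots> = ?d] (mod 2)"
      using 2 by (simp add: cong_mod_even_mod_2)
    also have "[?d = psi p q (n - 1) (gL g) + psi p q (n - 1) (gR g)] (mod 2)"
      by (simp add: cong_iff_dvd_diff)
    also have "[psi p q (n - 1) (gL g) + psi p q (n - 1) (gR g) = psi p q n g] (mod 2)"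
      using psi_odd_cong_children[OF assms 2] by (rule cong_sym)
    finally show ?thesis .
  next
    case 3
    let ?d = "(p + q) * psi p q n g - 2 * psi p q (n - 1) (gR g)"
    have "snd (Delta p q n g) = ?d mod 2 ^ (n div 2)"
      using 3 by (simp add: Delta_def)
    also have "[\<dots> = ?d] (mod 2)"
      using 3 by (simp add: cong_mod_even_mod_2)
    also have "[?d = psi p q n g] (mod 2)"
      using assms by (simp add: cong_iff_dvd_diff)
    finally show ?thesis .
  qed
qed

lemma Phi_snd_cong:
  assumes "odd (p + q)" and "even m"
  shows "[snd (Phi p q m d) = of_bool (fst d) + snd d] (mod 2)"
proof -
  let ?d = "(if fst d then (p + q) * (p - q) else 0) - snd d"
  have "[snd (Phi p q m d) = ?d] (mod 2)"
    unfolding Phi_def using assms(2) by (simp add: cong_mod_even_mod_2)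
  moreover have "odd ((p + q) * (p - q))"
    using assms(1) by simp
  then have "[?d = of_bool (fst d) + snd d] (mod 2)"
    by (simp add: cong_iff_dvd_diff)
  ultimately show ?thesis
    using cong_trans by blast
qed

lemma inJ_psi_children_cong_gf:
  assumes "odd (p + q)" and "even n" and "n \<ge> 4" and "inJ p q n g"
  shows "[psi p q (n - 1) (gL g) + psi p q (n - 1) (gR g) = of_bool (gf (gL g))] (mod 2)"
proof -
  have "\<exists>k. n = Suc (Suc (Suc k))"
    using assms(3) by presburger
  then obtain k where n: "n = Suc (Suc (Suc k))" ..
  let ?m = "(2::int) ^ ((n - 1) div 2)"
  let ?\<Delta>L = "Delta p q (n - 1) (gL g)" and ?\<Delta>R = "Delta p q (n - 1) (gR g)"
  have J: "?\<Delta>L = Phi p q ?m ?\<Delta>R"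
    using assms(4) by (simp add: n)
  then have gf_eq: "gf (gL g) = gf (gR g)"
    by (metis fst_Delta fst_Phi)
  have "even ?m"
    using assms(3) by simp
  have "[psi p q (n - 1) (gL g) = snd ?\<Delta>L] (mod 2)"
    using Delta_snd_cong_psi[OF assms(1)] by (rule cong_sym)
  also have "[snd ?\<Delta>L = of_bool (gf (gL g)) + snd ?\<Delta>R] (mod 2)"
    unfolding J using Phi_snd_cong[OF assms(1) \<open>even ?m\<close>, of ?\<Delta>R] by (simp add: gf_eq)
  also have "[of_bool (gf (gL g)) + snd ?\<Delta>R =
      of_bool (gf (gL g)) + psi p q (n - 1) (gR g)] (mod 2)"
    using Delta_snd_cong_psi[OF assms(1)] by (rule cong_add_lcancel[THEN iffD2])
  finally show ?thesis
    by (simp add: cong_iff_dvd_diff)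
qed

theorem lemma7:
  fixes p q :: int and n :: nat and g :: atree
  assumes "p > 0" and "q > 0" and "odd (p + q)"
    and "n \<ge> 3" and "inJ p q n g"
  shows "[psi p q n g = psi p q (n - 1) (gL g) + psi p q (n - 1) (gR g)] (mod 2)"
proof (cases "odd n")
  case True
  then show ?thesis
    using psi_odd_cong_children assms(3,4) by blast
next
  case False
  then have "n \<ge> 4"
    using assms(4) by presburger
  have "[psi p q n g = of_bool (gf (gL g))] (mod 2)"
    using psi_even_cong_gf[OF assms(3)] False \<open>n \<ge> 4\<close> by simp
  moreover have "[psi p q (n - 1) (gL g) + psi p q (n - 1) (gR g) = of_bool (gf (gL g))] (mod 2)"
    using inJ_psi_children_cong_gf[OF assms(3) _ \<open>n \<ge> 4\<close> assms(5)] False by simp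
  ultimately show ?thesis
    using cong_sym cong_trans by blast
qed

end
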